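(* Let $n\ge 1$ and let $\gamma: S^n\to\mathbb{R}_+$ be a continuous function. Then the Wulff shape $\mathcal{W}_\gamma\subset\mathbb{R}^{n+1}$ is self-dual, i.e. $\mathcal{W}_\gamma=\mathcal{DW}_\gamma$, if and only if the spherical convex body $\alpha_N^{-1}\circ Id(\mathcal{W}_\gamma)\subset S^{n+1}$ induced by $\mathcal{W}_\gamma$ is of constant width $\pi/2$.
   Context: $S^n$ is the unit sphere in $\mathbb{R}^{n+1}$, $\mathbb{R}_+$ the positive reals, and $x\cdot y$ the standard scalar product. For continuous $\gamma:S^n\to\mathbb{R}_+$, the Wulff shape is $\mathcal{W}_\gamma=\bigcap_{\theta\in S^n}\{x\in\mathbb{R}^{n+1}: x\cdot\theta\le\gamma(\theta)\}$; it is a convex body containing the origin in its interior. For each $\theta\in S^n$ the ray $\{r\theta: r>0\}$ meets $\partial\mathcal{W}_\gamma$ in exactly one point $w(\theta)\theta$ with $w(\theta)>0$. The dual Wulff shape is $\mathcal{DW}_\gamma=\mathcal{W}_{\overline{\gamma}}$ where $\overline{\gamma}(\theta)=1/w(-\theta)$; $\mathcal{W}_\gamma$ is self-dual if $\mathcal{W}_\gamma=\mathcal{DW}_\gamma$. On $S^{n+1}\subset\mathbb{R}^{n+2}$: for $P\in S^{n+1}$, $H(P)=\{Q\in S^{n+1}: P\cdot Q\ge 0\}$. A subset $\widetilde W\subset S^{n+1}$ is hemispherical if there is $P$ with $\widetilde W\cap H(P)=\emptyset$. For $P,Q\in S^{n+1}$, $P\neq -Q$, the arc $PQ=\{((1-t)P+tQ)/\|(1-t)P+tQ\|: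 t\in[0,1]\}$ and $|PQ|=\arccos(P\cdot Q)$ is its length. A hemispherical set is spherical convex if it contains the arc $PQ$ whenever it contains $P,Q$; a spherical convex body is a closed, spherical convex, hemispherical set with nonempty interior. $H(P)$ supports $\widetilde W$ if $\widetilde W\subset H(P)$ and $\partial\widetilde W\cap\partial H(P)\neq\emptyset$. For $P\neq\pm Q$, $H(P)\cap H(Q)$ is a lune with thickness $\Delta(H(P)\cap H(Q))=\pi-|PQ|$. For $H(P)$ supporting $\widetilde W$, $\mathrm{width}_{H(P)}\widetilde W$ is the minimum of $\Delta(H(P)\cap H(Q))$ over all $H(Q)$ supporting $\widetilde W$ with $\widetilde W\subset H(P)\cap H(Q)$. For $0<\rho<\pi$, $\widetilde W$ is of constant width $\rho$ if $\mathrm{width}_{H(P)}\widetilde W=\rho$ for every hemisphere $H(P)$ supporting $\widetilde W$. $N=(0,\dots,0,1)\in S^{n+1}$, $Id:\mathbb{R}^{n+1}\to\mathbb{R}^{n+1}\times\{1\}$, $Id(x)=(x,1)$, and $\alpha_N:\{P\in S^{n+1}: P_{n+2}>0\}\to\mathbb{R}^{n+1}\times\{1\}$ is the central projection $\alpha_N(P_1,\dots,P_{n+2})=(P_1/P_{n+2},\dots,P_{n+1}/P_{n+2},1)$. The spherical convex body induced by a Wulff shape $W$ is $\alpha_N^{-1}\circ Id(W)$. *)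

theory Defs
  imports "HOL-Analysis.Analysis"
begin

text \<open>R^{n+1} is modelled by an arbitrary euclidean space 'a (DIM('a) = n+1),
  and R^{n+2} by 'a \<times> real, whose last coordinate is the real component.\<close>

definition Wulff :: "('a::euclidean_space \<Rightarrow> real) \<Rightarrow> 'a set" where
  "Wulff \<gamma> = (\<Inter>\<theta>\<in>sphere 0 1. {x. x \<bullet> \<theta> \<le> \<gamma> \<theta>})"

definition radial :: "('a::euclidean_space \<Rightarrow> real) \<Rightarrow> 'a \<Rightarrow> real" where
  "radial \<gamma> \<theta> = (THE r. r > 0 \<and> r *\<^sub>R \<theta> \<in> frontier (Wulff \<gamma>))"

definition dual_gamma :: "('a::euclidean_space \<Rightarrow> real) \<Rightarrow> 'a \<Rightarrow> real" where
  "dual_gamma \<gamma> \<theta> = 1 / radial \<gamma> (- \<theta>)"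

definition dual_Wulff :: "('a::euclidean_space \<Rightarrow> real) \<Rightarrow> 'a set" where
  "dual_Wulff \<gamma> = Wulff (dual_gamma \<gamma>)"

definition self_dual :: "('a::euclidean_space \<Rightarrow> real) \<Rightarrow> bool" where
  "self_dual \<gamma> \<longleftrightarrow> Wulff \<gamma> = dual_Wulff \<gamma>"

abbreviation S1 :: "('a::euclidean_space \<times> real) set" where
  "S1 \<equiv> sphere 0 1"

definition hemi :: "'a::euclidean_space \<times> real \<Rightarrow> ('a \<times> real) set" where
  "hemi P = {Q \<in> S1. P \<bullet> Q \<ge> 0}"

definition hemispherical :: "('a::euclidean_space \<times> real) set \<Rightarrow> bool" where
  "hemispherical W \<longleftrightarrow> W \<subseteq> S1 \<and> (\<exists>P\<in>S1. W \<inter> hemi P = {})"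

definition sph_arc :: "'a::euclidean_space \<times> real \<Rightarrow> 'a \<times> real \<Rightarrow> ('a \<times> real) set" where
  "sph_arc P Q = {((1 - t) *\<^sub>R P + t *\<^sub>R Q) /\<^sub>R norm ((1 - t) *\<^sub>R P + t *\<^sub>R Q) | t. t \<in> {0..1}}"

definition arc_length :: "'a::euclidean_space \<times> real \<Rightarrow> 'a \<times> real \<Rightarrow> real" where
  "arc_length P Q = arccos (P \<bullet> Q)"

definition spherical_convex :: "('a::euclidean_space \<times> real) set \<Rightarrow> bool" where
  "spherical_convex W \<longleftrightarrow> hemispherical W \<and> (\<forall>P\<in>W. \<forall>Q\<in>W. sph_arc P Q \<subseteq> W)"

definition spherical_convex_body :: "('a::euclidean_space \<times> real) set \<Rightarrow> bool" where
  "spherical_convex_body W \<longleftrightarrow>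
     closedin (top_of_set S1) W \<and> spherical_convex W \<and> hemispherical W \<and>
     (top_of_set S1) interior_of W \<noteq> {}"

definition supports :: "'a::euclidean_space \<times> real \<Rightarrow> ('a \<times> real) set \<Rightarrow> bool" where
  "supports P W \<longleftrightarrow> W \<subseteq> hemi P \<and>
     ((top_of_set S1) frontier_of W) \<inter> ((top_of_set S1) frontier_of (hemi P)) \<noteq> {}"

text \<open>thickness of the lune H(P) \<inter> H(Q), P \<noteq> \<plusminus>Q\<close>
definition lune_thickness :: "'a::euclidean_space \<times> real \<Rightarrow> 'a \<times> real \<Rightarrow> real" where
  "lune_thickness P Q = pi - arc_length P Q"

definition sph_width :: "('a::euclidean_space \<times> real) set \<Rightarrow> 'a \<times> real \<Rightarrow> real" where
  "sph_width W P = Inf {lune_thickness P Q | Q. Q \<in> S1 \<and> Q \<noteq> P \<and> Q \<noteq> - P \<and>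
                         supports Q W \<and> W \<subseteq> hemi P \<inter> hemi Q}"

definition constant_width :: "('a::euclidean_space \<times> real) set \<Rightarrow> real \<Rightarrow> bool" where
  "constant_width W \<rho> \<longleftrightarrow> (\<forall>P\<in>S1. supports P W \<longrightarrow> sph_width W P = \<rho>)"

definition Id_lift :: "'a::euclidean_space \<Rightarrow> 'a \<times> real" where
  "Id_lift x = (x, 1)"

definition alpha_N :: "'a::euclidean_space \<times> real \<Rightarrow> 'a \<times> real" where
  "alpha_N P = (fst P /\<^sub>R snd P, 1)"

text \<open>alpha_N^{-1} \<circ> Id (W): preimage under alpha_N restricted to the open upper hemisphere\<close>
definition induced_body :: "'a::euclidean_space set \<Rightarrow> ('a \<times> real) set" where
  "induced_body W = {P \<in> S1. snd P > 0 \<and> alpha_N P \<in> Id_lift ` W}"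

end

theory Submission
  imports Defs
begin

text \<open>
  Lifting \<open>x\<close> to the unit vector in direction \<open>(x, 1)\<close> turns the Wulff shape \<open>W\<close> into the
  induced spherical body, and the lifts of \<open>y\<close> and \<open>z\<close> have inner product of the sign of
  \<open>1 + y \<bullet> z\<close>. The dual Wulff shape is the dual body \<open>D = {y. \<forall>x\<in>W. -1 \<le> y \<bullet> x}\<close>, and the
  hemispheres supporting the induced body are exactly those centred at lifts of the points
  \<open>y \<in> D\<close> touching \<open>W\<close> (\<open>y \<bullet> x = -1\<close> for some \<open>x \<in> W\<close>); the width there is \<open>\<pi>\<close> minus the
  largest angle between the lift of \<open>y\<close> and the lift of another such point.

  If \<open>W = D\<close>, the point \<open>x\<close> touched by \<open>y\<close> is again such a point, at angle exactly \<open>\<pi>/2\<close>, and no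
  angle exceeds \<open>\<pi>/2\<close>. Conversely, width \<open>\<pi>/2\<close> everywhere gives \<open>y \<bullet> z \<ge> -1\<close> on the touching
  points, hence by scaling on all of \<open>D\<close>, so \<open>D\<close> lies in its own dual, which is contained in
  \<open>W\<close> by the bipolar theorem. A point \<open>x \<in> W\<close> outside \<open>D\<close> would give a touching point
  \<open>x /\<^sub>R a\<close> with \<open>a > 1\<close> whose angles all stay uniformly below \<open>\<pi>/2\<close>, i.e. width \<open>> \<pi>/2\<close>.
\<close>

section \<open>Central lift\<close>

lemma norm_Pair_one_pos: "0 < norm (x, 1::real)"
  by (simp add: zero_prod_def)

definition central_lift :: "'a::euclidean_space \<Rightarrow> 'a \<times> real" where
  "central_lift x = (x, 1) /\<^sub>R norm (x, 1::real)"

lemma central_lift_in_sphere: "central_lift x \<in> sphere 0 1"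
  using norm_Pair_one_pos[of x] unfolding central_lift_def mem_sphere_0 norm_scaleR by simp

lemma snd_central_lift_pos: "0 < snd (central_lift x)"
  using norm_Pair_one_pos[of x] by (simp add: central_lift_def)

lemma inner_central_lift:
  "P \<bullet> central_lift x = (fst P \<bullet> x + snd P) / norm (x, 1::real)"
  using norm_Pair_one_pos[of x] by (cases P) (simp add: central_lift_def inner_Pair field_simps)

lemma inner_central_lift_central_lift:
  "central_lift y \<bullet> central_lift z = (y \<bullet> z + 1) / (norm (y, 1::real) * norm (z, 1::real))"
  using norm_Pair_one_pos[of y] norm_Pair_one_pos[of z]
  unfolding inner_central_lift by (simp add: central_lift_def field_simps)

lemma central_lift_inner_nonneg_iff:
  "0 \<le> central_lift y \<bullet> central_lift z \<longleftrightarrow> -1 \<le> y \<bullet> z"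
proof -
  have "0 < norm (y, 1::real) * norm (z, 1::real)"
    using norm_Pair_one_pos[of y] norm_Pair_one_pos[of z] by simp
  then show ?thesis by (auto simp: inner_central_lift_central_lift zero_le_divide_iff)
qed

lemma inner_central_lift_eq_0_iff:
  "central_lift y \<bullet> central_lift z = 0 \<longleftrightarrow> y \<bullet> z = -1"
  using norm_Pair_one_pos[of y] norm_Pair_one_pos[of z]
  by (auto simp: inner_central_lift_central_lift)

lemma abs_inner_central_lift_le: "\<bar>central_lift y \<bullet> central_lift z\<bar> \<le> 1"
  using Cauchy_Schwarz_ineq2[of "central_lift y" "central_lift z"]
    central_lift_in_sphere[of y] central_lift_in_sphere[of z]
  by simp

lemma inj_central_lift: "inj central_lift"
proof
  fix y z :: 'a assume eq: "central_lift y = central_lift z"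
  then have "snd (central_lift y) = snd (central_lift z)" by simp
  then have "norm (y, 1::real) = norm (z, 1::real)" by (simp add: central_lift_def)
  moreover have "fst (central_lift y) = fst (central_lift z)" using eq by simp
  ultimately show "y = z" using norm_Pair_one_pos[of y] by (simp add: central_lift_def)
qed

lemma central_lift_neq_uminus: "central_lift z \<noteq> - central_lift y"
proof
  assume "central_lift z = - central_lift y"
  then have "snd (central_lift z) = - snd (central_lift y)" by simp
  then show False using snd_central_lift_pos[of z] snd_central_lift_pos[of y] by linarith
qed

lemma central_lift_fst_div_snd:
  assumes "Q \<in> sphere 0 1" "0 < snd Q"
  shows "central_lift (fst Q /\<^sub>R snd Q) = Q"
proof -
  obtain p t where Q: "Q = (p, t)" by (cases Q)
  have t: "0 < t" using assms Q by simp
  have eq: "(p /\<^sub>R t, 1::real) = inverse t *\<^sub>R (p, t)" using t by simp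
  have "norm (p /\<^sub>R t, 1::real) = inverse t"
    unfolding eq norm_scaleR using assms Q t by simp
  then show ?thesis unfolding central_lift_def Q eq using t by simp
qed

lemma induced_body_eq_image: "induced_body K = central_lift ` K"
proof (intro equalityI subsetI)
  fix Q assume "Q \<in> induced_body K"
  then have "Q \<in> sphere 0 1" "0 < snd Q" "fst Q /\<^sub>R snd Q \<in> K"
    by (auto simp: induced_body_def alpha_N_def Id_lift_def)
  then show "Q \<in> central_lift ` K" using central_lift_fst_div_snd by (metis image_eqI)
next
  fix Q assume "Q \<in> central_lift ` K"
  then obtain x where "x \<in> K" "Q = central_lift x" by blast
  moreover have "fst (central_lift x) /\<^sub>R snd (central_lift x) = x"
    using norm_Pair_one_pos[of x] by (simp add: central_lift_def)
  ultimately show "Q \<in> induced_body K"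
    using central_lift_in_sphere snd_central_lift_pos
    by (auto simp: induced_body_def alpha_N_def Id_lift_def)
qed

lemma continuous_on_central_lift: "continuous_on S central_lift"
  unfolding central_lift_def using norm_Pair_one_pos
  by (intro continuous_intros) auto

lemma closedin_induced_body:
  assumes "compact K"
  shows "closedin (top_of_set (sphere 0 1)) (induced_body K)"
  unfolding induced_body_eq_image
  using compact_continuous_image[OF continuous_on_central_lift assms] central_lift_in_sphere
  by (intro closed_subset) (auto intro: compact_imp_closed)

section \<open>Supporting hemispheres\<close>

lemma closedin_hemi: "closedin (top_of_set (sphere 0 1)) (hemi P)"
proof -
  have "hemi P = sphere 0 1 \<inter> {Q. P \<bullet> Q \<ge> 0}" by (auto simp: hemi_def)
  then show ?thesis by (simp add: closedin_closed_Int closed_halfspace_ge)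
qed

lemma not_in_interior_of_subset_hemi:
  fixes P q :: "'a::euclidean_space \<times> real"
  assumes P: "P \<in> sphere 0 1" and q: "q \<in> sphere 0 1" and Pq: "P \<bullet> q = 0" and S: "S \<subseteq> hemi P"
  shows "q \<notin> top_of_set (sphere 0 1) interior_of S"
proof
  assume "q \<in> top_of_set (sphere 0 1) interior_of S"
  then obtain U where U: "openin (top_of_set (sphere 0 1)) U" "q \<in> U" "U \<subseteq> S"
    by (auto simp: interior_of_def)
  then obtain T where T: "open T" "U = sphere 0 1 \<inter> T" by (auto simp: openin_open)
  then obtain e where e: "e > 0" "ball q e \<subseteq> T" using U(2) open_contains_ball by blast
  \<comment> \<open>\<open>R = a q - b P\<close> is a unit vector within \<open>e\<close> of \<open>q\<close> strictly outside \<open>H(P)\<close>.\<close>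
  define b where "b = min (1/2) (e/4)"
  define a where "a = sqrt (1 - b\<^sup>2)"
  have b: "0 < b" "b \<le> 1/2" "b \<le> e/4" using e by (auto simp: b_def)
  have b2: "b\<^sup>2 \<le> b/2" using b by (simp add: power2_eq_square mult_left_le)
  have a: "0 \<le> a" "a \<le> 1" "a\<^sup>2 = 1 - b\<^sup>2" using b b2 by (auto simp: a_def)
  have a2: "1 - b\<^sup>2 \<le> a"
    using mult_left_mono[of a 1 a] a by (simp add: power2_eq_square)
  have nP: "P \<bullet> P = 1" "q \<bullet> q = 1" using P q by (simp_all add: norm_eq_1[symmetric])
  define R where "R = a *\<^sub>R q - b *\<^sub>R P"
  have "R \<bullet> R = a\<^sup>2 + b\<^sup>2"
    unfolding R_def using nP Pq
    by (simp add: inner_diff_left inner_diff_right inner_commute power2_eq_square)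
  then have nR: "norm R = 1" using a by (simp add: norm_eq_1)
  have "q - R = (1 - a) *\<^sub>R q + b *\<^sub>R P" by (simp add: R_def algebra_simps)
  then have "norm (q - R) \<le> norm ((1 - a) *\<^sub>R q) + norm (b *\<^sub>R P)"
    by (metis norm_triangle_ineq)
  also have "\<dots> = (1 - a) + b" using a b P q by simp
  also have "\<dots> < e" using a2 b2 b by linarith
  finally have "R \<in> U" using e T nR by (auto simp: dist_norm)
  then have "R \<in> hemi P" using U S by auto
  moreover have "P \<bullet> R = - b" unfolding R_def using nP Pq by (simp add: inner_diff_right)
  ultimately show False using b by (simp add: hemi_def)
qed

lemma frontier_of_hemi:
  assumes P: "P \<in> sphere 0 1"
  shows "top_of_set (sphere 0 1) frontier_of hemi P = {q \<in> sphere 0 1. P \<bullet> q = 0}"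
proof (intro equalityI subsetI)
  let ?X = "top_of_set (sphere (0::'a \<times> real) 1)"
  fix q assume q: "q \<in> ?X frontier_of hemi P"
  then have qH: "q \<in> hemi P" using frontier_of_subset_closedin[OF closedin_hemi] by blast
  have "\<not> P \<bullet> q > 0"
  proof
    assume pos: "P \<bullet> q > 0"
    let ?V = "sphere 0 1 \<inter> {Q. P \<bullet> Q > 0}"
    have "openin ?X ?V" by (rule openin_open_Int) (rule open_halfspace_gt)
    moreover have "?V \<subseteq> hemi P" by (auto simp: hemi_def)
    ultimately have "?V \<subseteq> ?X interior_of hemi P" by (rule interior_of_maximal[rotated])
    moreover have "q \<in> ?V" using qH pos by (auto simp: hemi_def)
    ultimately show False using q by (auto simp: frontier_of_def)
  qed
  then show "q \<in> {q \<in> sphere 0 1. P \<bullet> q = 0}" using qH by (auto simp: hemi_def)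
next
  fix q assume "q \<in> {q \<in> sphere 0 1. P \<bullet> q = 0}"
  then have q: "q \<in> sphere 0 1" "P \<bullet> q = 0" by simp_all
  have "hemi P \<subseteq> topspace (top_of_set (sphere 0 1))" by (auto simp: hemi_def)
  moreover have "q \<in> hemi P" using q by (simp add: hemi_def)
  ultimately have "q \<in> top_of_set (sphere 0 1) closure_of hemi P"
    using closure_of_subset by blast
  moreover have "q \<notin> top_of_set (sphere 0 1) interior_of hemi P"
    using not_in_interior_of_subset_hemi[OF P q order_refl] .
  ultimately show "q \<in> top_of_set (sphere 0 1) frontier_of hemi P"
    by (simp add: frontier_of_def)
qed

lemma supports_iff_touching:
  assumes P: "P \<in> sphere 0 1" and S: "closedin (top_of_set (sphere 0 1)) S"
  shows "supports P S \<longleftrightarrow> S \<subseteq> hemi P \<and> (\<exists>q\<in>S. P \<bullet> q = 0)"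
proof
  assume "supports P S"
  then obtain q where "S \<subseteq> hemi P" "q \<in> top_of_set (sphere 0 1) frontier_of S"
    "q \<in> top_of_set (sphere 0 1) frontier_of hemi P"
    unfolding supports_def by blast
  then show "S \<subseteq> hemi P \<and> (\<exists>q\<in>S. P \<bullet> q = 0)"
    using frontier_of_hemi[OF P] frontier_of_subset_closedin[OF S] by blast
next
  assume "S \<subseteq> hemi P \<and> (\<exists>q\<in>S. P \<bullet> q = 0)"
  then obtain q where SH: "S \<subseteq> hemi P" and q: "q \<in> S" "P \<bullet> q = 0" by blast
  have qS1: "q \<in> sphere 0 1" using q SH by (auto simp: hemi_def)
  have "q \<in> top_of_set (sphere 0 1) closure_of S"
    using closure_of_subset[OF closedin_subset[OF S]] q(1) by blast
  then have "q \<in> top_of_set (sphere 0 1) frontier_of S"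
    using not_in_interior_of_subset_hemi[OF P qS1 q(2) SH] by (simp add: frontier_of_def)
  moreover have "q \<in> top_of_set (sphere 0 1) frontier_of hemi P"
    using frontier_of_hemi[OF P] qS1 q(2) by simp
  ultimately show "supports P S" unfolding supports_def using SH by blast
qed

section \<open>Dual bodies\<close>

definition dual_set :: "'a::real_inner set \<Rightarrow> 'a set" where
  "dual_set K = {y. \<forall>x\<in>K. -1 \<le> y \<bullet> x}"

text \<open>For compact \<open>K\<close> with \<open>0\<close> in its interior these are the frontier points of \<open>dual_set K\<close>.\<close>
definition dual_contact :: "'a::real_inner set \<Rightarrow> 'a set" where
  "dual_contact K = {y \<in> dual_set K. \<exists>x\<in>K. y \<bullet> x = -1}"

lemma dual_set_dual_set_subset:
  fixes K :: "'a::euclidean_space set"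
  assumes "convex K" "closed K" "0 \<in> K"
  shows "dual_set (dual_set K) \<subseteq> K"
proof
  fix z assume z: "z \<in> dual_set (dual_set K)"
  show "z \<in> K"
  proof (rule ccontr)
    assume "z \<notin> K"
    then obtain a b where ab: "a \<bullet> z < b" "\<forall>x\<in>K. b < a \<bullet> x"
      using separating_hyperplane_closed_point[OF assms(1,2)] by blast
    have b: "b < 0" using ab(2) assms(3) by force
    have "-1 \<le> (a /\<^sub>R (- b)) \<bullet> x" if "x \<in> K" for x
      using ab(2) that b by (simp add: field_simps less_imp_le)
    then have "a /\<^sub>R (- b) \<in> dual_set K" by (simp add: dual_set_def)
    then have "-1 \<le> z \<bullet> (a /\<^sub>R (- b))"
      using z unfolding dual_set_def mem_Collect_eq by blast
    then show False using ab(1) b by (simp add: inner_commute field_simps)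
  qed
qed

lemma norm_le_if_in_dual_set:
  assumes cb: "cball 0 c \<subseteq> K" and c: "0 < c" and z: "z \<in> dual_set K"
  shows "norm z \<le> 1 / c"
proof (cases "z = 0")
  case False
  have "- (c / norm z) *\<^sub>R z \<in> K" using cb c by auto
  then have "-1 \<le> z \<bullet> (- (c / norm z) *\<^sub>R z)" using z by (auto simp: dual_set_def)
  also have "\<dots> = - c * norm z" using False by (simp add: dot_square_norm power2_eq_square)
  finally show ?thesis using c by (simp add: field_simps)
qed (use c in simp)

text \<open>The scaling factor is \<open>- min (y \<bullet> K)\<close>, positive because \<open>0 \<in> interior K\<close>.\<close>
lemma scaled_in_dual_contact:
  fixes y :: "'a::euclidean_space"
  assumes K: "compact K" and cb: "cball 0 c \<subseteq> K" and c: "0 < c" and y: "y \<noteq> 0"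
  obtains a where "0 < a" "y /\<^sub>R a \<in> dual_contact K" "y \<in> dual_set K \<Longrightarrow> a \<le> 1"
proof -
  have "K \<noteq> {}" using cb c by auto
  moreover have "continuous_on K (\<lambda>x. y \<bullet> x)" by (intro continuous_intros)
  ultimately obtain xm where xm: "xm \<in> K" "\<And>x. x \<in> K \<Longrightarrow> y \<bullet> xm \<le> y \<bullet> x"
    using continuous_attains_inf[OF K] by blast
  define a where "a = - (y \<bullet> xm)"
  have "- (c / norm y) *\<^sub>R y \<in> K" using cb c by auto
  then have "y \<bullet> xm \<le> y \<bullet> (- (c / norm y) *\<^sub>R y)" by (rule xm(2))
  also have "\<dots> = - (c * norm y)" using y by (simp add: dot_square_norm power2_eq_square)
  finally have "c * norm y \<le> a" by (simp add: a_def)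
  moreover have "0 < c * norm y" using c y by simp
  ultimately have a: "0 < a" by linarith
  have "(y /\<^sub>R a) \<bullet> x = (y \<bullet> x) / a" for x by (simp add: divide_inverse_commute)
  then have "y /\<^sub>R a \<in> dual_set K" and "(y /\<^sub>R a) \<bullet> xm = -1"
    using xm a by (auto simp: dual_set_def a_def le_divide_eq)
  then have "y /\<^sub>R a \<in> dual_contact K"
    using xm(1) by (auto simp: dual_contact_def)
  moreover have "a \<le> 1" if "y \<in> dual_set K" using that xm(1) by (auto simp: dual_set_def a_def)
  ultimately show ?thesis using a that by blast
qed

section \<open>Wulff shapes\<close>

lemma closed_Wulff: "closed (Wulff \<gamma>)"
  unfolding Wulff_def
  by (intro closed_INT ballI) (simp add: inner_commute closed_halfspace_le)

lemma convex_Wulff: "convex (Wulff \<gamma>)"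
  unfolding Wulff_def
  by (intro convex_INT ballI) (simp add: inner_commute convex_halfspace_le)

lemma sphere_nonempty: "sphere (0::'a::euclidean_space) 1 \<noteq> {}"
  using norm_Basis nonempty_Basis by (metis all_not_in_conv mem_sphere_0)

lemma Wulff_contains_cball:
  fixes \<gamma> :: "'a::euclidean_space \<Rightarrow> real"
  assumes cont: "continuous_on (sphere 0 1) \<gamma>" and pos: "\<forall>\<theta>\<in>sphere 0 1. 0 < \<gamma> \<theta>"
  obtains c where "0 < c" "cball 0 c \<subseteq> Wulff \<gamma>"
proof -
  obtain \<theta>0 where \<theta>0: "\<theta>0 \<in> sphere 0 1" "\<And>\<theta>. \<theta> \<in> sphere 0 1 \<Longrightarrow> \<gamma> \<theta>0 \<le> \<gamma> \<theta>"
    using continuous_attains_inf[OF compact_sphere sphere_nonempty cont] by blast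
  have "x \<bullet> \<theta> \<le> \<gamma> \<theta>" if "x \<in> cball 0 (\<gamma> \<theta>0)" "\<theta> \<in> sphere 0 1" for x \<theta>
    using norm_cauchy_schwarz[of x \<theta>] \<theta>0(2)[of \<theta>] that by auto
  then have "cball 0 (\<gamma> \<theta>0) \<subseteq> Wulff \<gamma>" by (auto simp: Wulff_def)
  then show ?thesis using that pos \<theta>0(1) by blast
qed

lemma compact_Wulff:
  fixes \<gamma> :: "'a::euclidean_space \<Rightarrow> real"
  assumes cont: "continuous_on (sphere 0 1) \<gamma>"
  shows "compact (Wulff \<gamma>)"
proof -
  obtain \<theta>1 where \<theta>1: "\<theta>1 \<in> sphere 0 1" "\<And>\<theta>. \<theta> \<in> sphere 0 1 \<Longrightarrow> \<gamma> \<theta> \<le> \<gamma> \<theta>1"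
    using continuous_attains_sup[OF compact_sphere sphere_nonempty cont] by blast
  have "norm x \<le> max 0 (\<gamma> \<theta>1)" if x: "x \<in> Wulff \<gamma>" for x
  proof (cases "x = 0")
    case False
    then have "x /\<^sub>R norm x \<in> sphere 0 1" by simp
    then have "x \<bullet> (x /\<^sub>R norm x) \<le> \<gamma> (x /\<^sub>R norm x)" using x unfolding Wulff_def by blast
    moreover have "x \<bullet> (x /\<^sub>R norm x) = norm x"
      using False by (simp add: dot_square_norm power2_eq_square)
    ultimately show ?thesis using \<theta>1(2) \<open>x /\<^sub>R norm x \<in> sphere 0 1\<close> by fastforce
  qed simp
  then have "bounded (Wulff \<gamma>)" by (auto simp: bounded_iff)
  then show ?thesis using closed_Wulff by (simp add: compact_eq_bounded_closed)
qed

lemma ray_exit_point: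
  fixes K :: "'a::euclidean_space set"
  assumes K: "compact K" "convex K" and cb: "cball 0 c \<subseteq> K" and c: "0 < c"
    and \<theta>: "norm \<theta> = 1"
  obtains \<rho> where "0 < \<rho>" "\<rho> *\<^sub>R \<theta> \<in> K" "\<And>s. s *\<^sub>R \<theta> \<in> K \<Longrightarrow> s \<le> \<rho>"
    "\<And>r. 0 < r \<Longrightarrow> r *\<^sub>R \<theta> \<in> frontier K \<longleftrightarrow> r = \<rho>"
proof -
  define T where "T = (\<lambda>s. s *\<^sub>R \<theta>) -` K"
  obtain B where B: "\<And>x. x \<in> K \<Longrightarrow> norm x \<le> B"
    using compact_imp_bounded[OF K(1)] by (auto simp: bounded_iff)
  have "closed T" unfolding T_def
    by (intro continuous_closed_vimage compact_imp_closed K(1) continuous_intros)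
  moreover have "bounded T"
  proof -
    have "norm s \<le> B" if "s \<in> T" for s
      using B[of "s *\<^sub>R \<theta>"] that \<theta> by (simp add: T_def)
    then show ?thesis by (auto simp: bounded_iff)
  qed
  ultimately have "compact T" by (simp add: compact_eq_bounded_closed)
  moreover have cT: "c \<in> T" using cb c \<theta> by (auto simp: T_def)
  ultimately obtain \<rho> where \<rho>: "\<rho> \<in> T" "\<And>s. s \<in> T \<Longrightarrow> s \<le> \<rho>"
    using continuous_attains_sup[of T "\<lambda>s. s"] continuous_on_id by blast
  have c\<rho>: "c \<le> \<rho>" using \<rho>(2)[OF cT] .
  have int0: "0 \<in> interior K" using cb c mem_interior_cball by blast
  have clK: "closure K = K" using compact_imp_closed[OF K(1)] by simp
  have frontier: "r *\<^sub>R \<theta> \<in> frontier K \<longleftrightarrow> r = \<rho>" if r: "0 < r" for r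
  proof (cases r \<rho> rule: linorder_cases)
    case less
    have "\<rho> *\<^sub>R \<theta> - (1 - r / \<rho>) *\<^sub>R (\<rho> *\<^sub>R \<theta> - 0) \<in> interior K"
      using less r c c\<rho> \<rho>(1) clK
      by (intro mem_interior_convex_shrink[OF K(2) int0]) (auto simp: T_def)
    moreover have "\<rho> *\<^sub>R \<theta> - (1 - r / \<rho>) *\<^sub>R (\<rho> *\<^sub>R \<theta> - 0) = r *\<^sub>R \<theta>"
      using c c\<rho> by (simp add: algebra_simps)
    ultimately show ?thesis using less by (simp add: frontier_def)
  next
    case equal
    have "\<rho> *\<^sub>R \<theta> \<notin> interior K"
    proof
      assume "\<rho> *\<^sub>R \<theta> \<in> interior K"
      then obtain e where e: "0 < e" "ball (\<rho> *\<^sub>R \<theta>) e \<subseteq> K" by (auto simp: mem_interior)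
      have "dist (\<rho> *\<^sub>R \<theta>) ((\<rho> + e/2) *\<^sub>R \<theta>) = e/2"
        using e \<theta> by (simp add: dist_norm algebra_simps)
      then have "\<rho> + e/2 \<in> T" using e by (auto simp: T_def)
      then show False using \<rho>(2) e by fastforce
    qed
    then show ?thesis using equal \<rho>(1) clK by (simp add: frontier_def T_def)
  next
    case greater
    then have "r *\<^sub>R \<theta> \<notin> K" using \<rho>(2) by (force simp: T_def)
    then show ?thesis using greater clK by (simp add: frontier_def)
  qed
  show ?thesis
    by (rule that) (use c c\<rho> \<rho> frontier in \<open>auto simp: T_def\<close>)
qed

lemma radial_Wulff:
  fixes \<gamma> :: "'a::euclidean_space \<Rightarrow> real"
  assumes cont: "continuous_on (sphere 0 1) \<gamma>" and pos: "\<forall>\<theta>\<in>sphere 0 1. 0 < \<gamma> \<theta>"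
    and \<theta>: "\<theta> \<in> sphere 0 1"
  shows "0 < radial \<gamma> \<theta>" "radial \<gamma> \<theta> *\<^sub>R \<theta> \<in> Wulff \<gamma>"
    "s *\<^sub>R \<theta> \<in> Wulff \<gamma> \<Longrightarrow> s \<le> radial \<gamma> \<theta>"
proof -
  obtain c where c: "0 < c" "cball 0 c \<subseteq> Wulff \<gamma>" using Wulff_contains_cball[OF cont pos] .
  obtain \<rho> where \<rho>: "0 < \<rho>" "\<rho> *\<^sub>R \<theta> \<in> Wulff \<gamma>" "\<And>s. s *\<^sub>R \<theta> \<in> Wulff \<gamma> \<Longrightarrow> s \<le> \<rho>"
    "\<And>r. 0 < r \<Longrightarrow> r *\<^sub>R \<theta> \<in> frontier (Wulff \<gamma>) \<longleftrightarrow> r = \<rho>"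
    using ray_exit_point[OF compact_Wulff[OF cont] convex_Wulff c(2,1)] \<theta> by auto
  have "radial \<gamma> \<theta> = \<rho>"
    unfolding radial_def using \<rho>(1,4) by (intro the_equality) auto
  then show "0 < radial \<gamma> \<theta>" "radial \<gamma> \<theta> *\<^sub>R \<theta> \<in> Wulff \<gamma>"
    "s *\<^sub>R \<theta> \<in> Wulff \<gamma> \<Longrightarrow> s \<le> radial \<gamma> \<theta>"
    using \<rho>(1-3) by auto
qed

lemma dual_Wulff_eq_dual_set:
  fixes \<gamma> :: "'a::euclidean_space \<Rightarrow> real"
  assumes cont: "continuous_on (sphere 0 1) \<gamma>" and pos: "\<forall>\<theta>\<in>sphere 0 1. 0 < \<gamma> \<theta>"
  shows "dual_Wulff \<gamma> = dual_set (Wulff \<gamma>)"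
proof (intro equalityI subsetI)
  note radial = radial_Wulff[OF cont pos]
  fix x assume x: "x \<in> dual_Wulff \<gamma>"
  have "-1 \<le> x \<bullet> y" if y: "y \<in> Wulff \<gamma>" for y
  proof (cases "y = 0")
    case False
    define \<theta> where "\<theta> = - (y /\<^sub>R norm y)"
    have \<theta>: "\<theta> \<in> sphere 0 1" "- \<theta> \<in> sphere 0 1" using False by (auto simp: \<theta>_def)
    define r where "r = radial \<gamma> (- \<theta>)"
    have r: "0 < r" using radial(1)[OF \<theta>(2)] by (simp add: r_def)
    have "norm y *\<^sub>R (- \<theta>) = y" using False by (simp add: \<theta>_def)
    then have yr: "norm y \<le> r" using radial(3)[OF \<theta>(2)] y by (simp add: r_def)
    have "x \<bullet> \<theta> \<le> 1 / r"
      using x \<theta>(1) unfolding dual_Wulff_def Wulff_def dual_gamma_def r_def by blast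
    then have "norm y * (x \<bullet> \<theta>) \<le> norm y / r"
      using mult_left_mono[of "x \<bullet> \<theta>" "1 / r" "norm y"] by simp
    also have "\<dots> \<le> 1" using yr r by simp
    finally have "norm y * (x \<bullet> \<theta>) \<le> 1" .
    moreover have "norm y * (x \<bullet> \<theta>) = - (x \<bullet> y)" using False by (simp add: \<theta>_def)
    ultimately show ?thesis by simp
  qed simp
  then show "x \<in> dual_set (Wulff \<gamma>)" by (simp add: dual_set_def)
next
  note radial = radial_Wulff[OF cont pos]
  fix x assume x: "x \<in> dual_set (Wulff \<gamma>)"
  have "x \<bullet> \<theta> \<le> dual_gamma \<gamma> \<theta>" if \<theta>: "\<theta> \<in> sphere 0 1" for \<theta>
  proof -
    have m\<theta>: "- \<theta> \<in> sphere 0 1" using \<theta> by simp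
    define r where "r = radial \<gamma> (- \<theta>)"
    have r: "0 < r" using radial(1)[OF m\<theta>] by (simp add: r_def)
    have "-1 \<le> x \<bullet> (r *\<^sub>R (- \<theta>))"
      using x radial(2)[OF m\<theta>] unfolding dual_set_def r_def by blast
    then have "x \<bullet> \<theta> * r \<le> 1" by (simp add: mult.commute)
    then show ?thesis using r by (simp add: dual_gamma_def r_def le_divide_eq)
  qed
  then show "x \<in> dual_Wulff \<gamma>" by (simp add: dual_Wulff_def Wulff_def)
qed

section \<open>Widths of the induced body\<close>

lemma supports_induced_body_iff:
  fixes K :: "'a::euclidean_space set"
  assumes K: "compact K" and cb: "cball 0 c \<subseteq> K" and c: "0 < c" and P: "P \<in> sphere 0 1"
  shows "supports P (induced_body K) \<longleftrightarrow> (\<exists>y\<in>dual_contact K. P = central_lift y)"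
proof -
  have "supports P (induced_body K) \<longleftrightarrow>
      (\<forall>x\<in>K. 0 \<le> P \<bullet> central_lift x) \<and> (\<exists>x\<in>K. P \<bullet> central_lift x = 0)"
    using supports_iff_touching[OF P closedin_induced_body[OF K]] central_lift_in_sphere
    by (auto simp: hemi_def induced_body_eq_image)
  also have "\<dots> \<longleftrightarrow> (\<exists>y\<in>dual_contact K. P = central_lift y)"
  proof
    assume A: "(\<forall>x\<in>K. 0 \<le> P \<bullet> central_lift x) \<and> (\<exists>x\<in>K. P \<bullet> central_lift x = 0)"
    obtain p t where Pp: "P = (p, t)" by (cases P)
    have ge: "0 \<le> p \<bullet> x + t" if "x \<in> K" for x
      using A that inner_central_lift[of P x] norm_Pair_one_pos[of x]
      by (auto simp: Pp zero_le_divide_iff)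
    obtain x0 where x0: "x0 \<in> K" "p \<bullet> x0 + t = 0"
      using A inner_central_lift[of P] norm_Pair_one_pos by (auto simp: Pp)
    have t: "0 < t"
    proof -
      have "0 \<in> K" using cb c by (metis centre_in_cball less_imp_le subsetD)
      then have "0 \<le> t" using ge[of 0] by simp
      moreover have "t \<noteq> 0"
      proof
        assume t0: "t = 0"
        then have "p \<noteq> 0" using P Pp by auto
        then have "- (c / norm p) *\<^sub>R p \<in> K" using cb c by auto
        from ge[OF this] have "c * norm p \<le> 0"
          using t0 \<open>p \<noteq> 0\<close> by (simp add: dot_square_norm power2_eq_square)
        then show False using c \<open>p \<noteq> 0\<close> by (simp add: mult_le_0_iff)
      qed
      ultimately show ?thesis by simp
    qed
    have "-1 \<le> (p /\<^sub>R t) \<bullet> x" if "x \<in> K" for x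
      using ge[OF that] t by (simp add: field_simps)
    moreover have "(p /\<^sub>R t) \<bullet> x0 = -1" using x0 t by (simp add: field_simps)
    ultimately have "p /\<^sub>R t \<in> dual_contact K"
      using x0(1) by (auto simp: dual_contact_def dual_set_def)
    moreover have "P = central_lift (p /\<^sub>R t)"
      using central_lift_fst_div_snd[of P] P t by (simp add: Pp)
    ultimately show "\<exists>y\<in>dual_contact K. P = central_lift y" by blast
  next
    assume "\<exists>y\<in>dual_contact K. P = central_lift y"
    then obtain y x0 where y: "y \<in> dual_set K" "P = central_lift y" and x0: "x0 \<in> K" "y \<bullet> x0 = -1"
      by (auto simp: dual_contact_def)
    then show "(\<forall>x\<in>K. 0 \<le> P \<bullet> central_lift x) \<and> (\<exists>x\<in>K. P \<bullet> central_lift x = 0)"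
      by (auto simp: central_lift_inner_nonneg_iff inner_central_lift_eq_0_iff dual_set_def)
  qed
  finally show ?thesis .
qed

definition contact_widths :: "'a::euclidean_space set \<Rightarrow> 'a \<Rightarrow> real set" where
  "contact_widths K y =
     {lune_thickness (central_lift y) (central_lift z) | z. z \<in> dual_contact K \<and> z \<noteq> y}"

lemma sph_width_induced_body:
  fixes K :: "'a::euclidean_space set"
  assumes K: "compact K" and cb: "cball 0 c \<subseteq> K" and c: "0 < c" and y: "y \<in> dual_contact K"
  shows "sph_width (induced_body K) (central_lift y) = Inf (contact_widths K y)"
proof -
  note supports = supports_induced_body_iff[OF K cb c]
  have supp_y: "induced_body K \<subseteq> hemi (central_lift y)"
    using supports[OF central_lift_in_sphere] y by (auto simp: supports_def)
  have "{lune_thickness (central_lift y) Q | Q. Q \<in> sphere 0 1 \<and> Q \<noteq> central_lift y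
      \<and> Q \<noteq> - central_lift y \<and> supports Q (induced_body K)
      \<and> induced_body K \<subseteq> hemi (central_lift y) \<inter> hemi Q} = contact_widths K y"
    (is "?S = _")
  proof (intro equalityI subsetI)
    fix t assume "t \<in> ?S"
    then obtain Q where Q: "t = lune_thickness (central_lift y) Q" "Q \<in> sphere 0 1"
      "Q \<noteq> central_lift y" "supports Q (induced_body K)" by blast
    then obtain z where "z \<in> dual_contact K" "Q = central_lift z" using supports by blast
    then show "t \<in> contact_widths K y" using Q by (auto simp: contact_widths_def)
  next
    fix t assume "t \<in> contact_widths K y"
    then obtain z where z: "t = lune_thickness (central_lift y) (central_lift z)"
      "z \<in> dual_contact K" "z \<noteq> y" by (auto simp: contact_widths_def)
    have supp_z: "supports (central_lift z) (induced_body K)"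
      using supports[OF central_lift_in_sphere] z(2) by blast
    then have "induced_body K \<subseteq> hemi (central_lift z)" by (simp add: supports_def)
    moreover have "central_lift z \<noteq> central_lift y" using inj_central_lift z(3) by (auto dest: injD)
    ultimately show "t \<in> ?S"
      using z(1) supp_y supp_z central_lift_in_sphere[of z] central_lift_neq_uminus[of z y]
      by blast
  qed
  then show ?thesis unfolding sph_width_def by (rule arg_cong[where f = Inf])
qed

lemma constant_width_induced_body_iff:
  fixes K :: "'a::euclidean_space set"
  assumes K: "compact K" and cb: "cball 0 c \<subseteq> K" and c: "0 < c"
  shows "constant_width (induced_body K) \<rho> \<longleftrightarrow> (\<forall>y\<in>dual_contact K. Inf (contact_widths K y) = \<rho>)"
proof -
  note supports = supports_induced_body_iff[OF K cb c]
  have "(\<forall>P\<in>sphere 0 1. supports P (induced_body K) \<longrightarrow> sph_width (induced_body K) P = \<rho>) \<longleftrightarrow>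
      (\<forall>y\<in>dual_contact K. sph_width (induced_body K) (central_lift y) = \<rho>)"
    using supports central_lift_in_sphere by blast
  then show ?thesis
    unfolding constant_width_def using sph_width_induced_body[OF K cb c] by simp
qed

lemma half_pi_le_lune_thickness_iff:
  "pi / 2 \<le> lune_thickness (central_lift y) (central_lift z) \<longleftrightarrow> -1 \<le> y \<bullet> z"
proof -
  define e where "e = central_lift y \<bullet> central_lift z"
  have e: "-1 \<le> e" "e \<le> 1" using abs_inner_central_lift_le[of y z] by (auto simp: e_def)
  have "pi / 2 \<le> lune_thickness (central_lift y) (central_lift z) \<longleftrightarrow> arccos e \<le> pi / 2"
    by (auto simp: lune_thickness_def arc_length_def e_def)
  also have "\<dots> \<longleftrightarrow> 0 \<le> e"
  proof
    assume le: "arccos e \<le> pi / 2"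
    show "0 \<le> e"
    proof (rule ccontr)
      assume "\<not> 0 \<le> e"
      then have "arccos 0 < arccos e" using e by (intro arccos_less_arccos) auto
      then show False using le by simp
    qed
  qed (use e arccos_le_pi2 in auto)
  also have "\<dots> \<longleftrightarrow> -1 \<le> y \<bullet> z" unfolding e_def by (rule central_lift_inner_nonneg_iff)
  finally show ?thesis .
qed

lemma bdd_below_contact_widths: "bdd_below (contact_widths K y)"
proof (rule bdd_belowI)
  fix t assume "t \<in> contact_widths K y"
  then obtain z where "t = pi - arccos (central_lift y \<bullet> central_lift z)"
    by (auto simp: contact_widths_def lune_thickness_def arc_length_def)
  then show "0 \<le> t" using abs_inner_central_lift_le[of y z] arccos_ubound by auto
qed

lemma contact_widths_nonempty:
  fixes K :: "'a::euclidean_space set"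
  assumes K: "compact K" and cb: "cball 0 c \<subseteq> K" and c: "0 < c" and y: "y \<in> dual_contact K"
  shows "contact_widths K y \<noteq> {}"
proof -
  have "y \<noteq> 0" using y by (auto simp: dual_contact_def)
  then obtain a where a: "0 < a" "(- y) /\<^sub>R a \<in> dual_contact K"
    using scaled_in_dual_contact[OF K cb c, of "- y"] by auto
  have yy: "0 < y \<bullet> y" using \<open>y \<noteq> 0\<close> by simp
  have "((- y) /\<^sub>R a) \<bullet> y = - ((y \<bullet> y) / a)" by (simp add: divide_inverse_commute)
  also have "\<dots> < y \<bullet> y" using divide_pos_pos[OF yy a(1)] yy by linarith
  finally have "((- y) /\<^sub>R a) \<bullet> y < y \<bullet> y" .
  then have "(- y) /\<^sub>R a \<noteq> y" by (metis less_irrefl)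
  then show ?thesis using a(2) by (auto simp: contact_widths_def)
qed

lemma Inf_contact_widths_if_self_dual:
  assumes self_dual: "K = dual_set K" and y: "y \<in> dual_contact K"
  shows "Inf (contact_widths K y) = pi / 2"
proof (rule cInf_eq_minimum)
  obtain x0 where x0: "x0 \<in> K" "y \<bullet> x0 = -1" using y by (auto simp: dual_contact_def)
  have "x0 \<in> dual_contact K"
    using x0 y self_dual by (auto simp: dual_contact_def inner_commute)
  moreover have "x0 \<noteq> y" using x0(2) by (metis inner_ge_zero neg_0_le_iff_le not_one_le_zero)
  ultimately show "pi / 2 \<in> contact_widths K y"
    using x0(2) inner_central_lift_eq_0_iff[of y x0]
    by (force simp: contact_widths_def lune_thickness_def arc_length_def)
next
  fix t assume "t \<in> contact_widths K y"
  then obtain z where z: "t = lune_thickness (central_lift y) (central_lift z)" "z \<in> dual_contact K"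
    by (auto simp: contact_widths_def)
  have "z \<in> K" "y \<in> dual_set K" using z(2) y self_dual by (auto simp: dual_contact_def)
  then show "pi / 2 \<le> t"
    unfolding z(1) half_pi_le_lune_thickness_iff by (auto simp: dual_set_def)
qed

lemma inner_ge_if_Inf_contact_widths:
  assumes Inf: "Inf (contact_widths K y) = pi / 2" and z: "z \<in> dual_contact K"
  shows "-1 \<le> y \<bullet> z"
proof (cases "z = y")
  case False
  then have "lune_thickness (central_lift y) (central_lift z) \<in> contact_widths K y"
    using z by (auto simp: contact_widths_def)
  then have "pi / 2 \<le> lune_thickness (central_lift y) (central_lift z)"
    using cInf_lower[OF _ bdd_below_contact_widths] Inf by metis
  then show ?thesis using half_pi_le_lune_thickness_iff by blast
next
  case True
  show ?thesis unfolding True using inner_ge_zero[of y] by linarith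
qed

lemma dual_set_subset_dual_set_dual_set_if_Inf_contact_widths:
  fixes K :: "'a::euclidean_space set"
  assumes K: "compact K" and cb: "cball 0 c \<subseteq> K" and c: "0 < c"
    and Inf: "\<forall>y\<in>dual_contact K. Inf (contact_widths K y) = pi / 2"
  shows "dual_set K \<subseteq> dual_set (dual_set K)"
proof -
  have "-1 \<le> y \<bullet> z" if y: "y \<in> dual_set K" and z: "z \<in> dual_set K" and "y \<noteq> 0" "z \<noteq> 0" for y z
  proof -
    obtain a where a: "0 < a" "y /\<^sub>R a \<in> dual_contact K" "a \<le> 1"
      using scaled_in_dual_contact[OF K cb c \<open>y \<noteq> 0\<close>] y by metis
    obtain b where b: "0 < b" "z /\<^sub>R b \<in> dual_contact K" "b \<le> 1"
      using scaled_in_dual_contact[OF K cb c \<open>z \<noteq> 0\<close>] z by metis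
    have "-1 \<le> (y /\<^sub>R a) \<bullet> (z /\<^sub>R b)"
      using inner_ge_if_Inf_contact_widths Inf a(2) b(2) by blast
    then have "- (a * b) \<le> y \<bullet> z" using a(1) b(1) by (simp add: field_simps)
    moreover have "a * b \<le> 1" using a b by (simp add: mult_le_one)
    ultimately show ?thesis by linarith
  qed
  then show ?thesis by (fastforce simp: dual_set_def)
qed

lemma Inf_contact_widths_gt_half_pi:
  fixes K :: "'a::euclidean_space set"
  assumes K: "compact K" and cb: "cball 0 c \<subseteq> K" and c: "0 < c" and y: "y \<in> dual_contact K"
    and \<delta>: "0 < \<delta>" "\<And>z. z \<in> dual_set K \<Longrightarrow> \<delta> - 1 \<le> y \<bullet> z"
  shows "pi / 2 < Inf (contact_widths K y)"
proof -
  define e where "e = min 1 (\<delta> / (norm (y, 1::real) * sqrt ((1 / c)\<^sup>2 + 1)))"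
  have "0 < norm (y, 1::real) * sqrt ((1 / c)\<^sup>2 + 1)"
    using norm_Pair_one_pos[of y] by (simp add: add_nonneg_pos)
  then have e: "0 < e" "e \<le> 1" using \<delta>(1) by (auto simp: e_def)
  have "pi - arccos e \<le> t" if t: "t \<in> contact_widths K y" for t
  proof -
    obtain z where "t = lune_thickness (central_lift y) (central_lift z)" "z \<in> dual_contact K"
      using t by (auto simp: contact_widths_def)
    then have z: "t = pi - arccos (central_lift y \<bullet> central_lift z)" "z \<in> dual_set K"
      by (simp_all add: lune_thickness_def arc_length_def dual_contact_def)
    have "norm (z, 1::real) \<le> sqrt ((1 / c)\<^sup>2 + 1)"
      using norm_le_if_in_dual_set[OF cb c z(2)]
      by (simp add: norm_Pair power_mono)
    then have "\<delta> / (norm (y, 1::real) * sqrt ((1 / c)\<^sup>2 + 1))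
        \<le> \<delta> / (norm (y, 1::real) * norm (z, 1::real))"
      using \<delta>(1) norm_Pair_one_pos[of y] norm_Pair_one_pos[of z]
      by (intro divide_left_mono mult_left_mono mult_pos_pos) (auto simp: add_nonneg_pos)
    also have "\<dots> \<le> central_lift y \<bullet> central_lift z"
      unfolding inner_central_lift_central_lift using \<delta>(2)[OF z(2)]
      by (intro divide_right_mono) (auto intro: norm_Pair_one_pos less_imp_le)
    finally have "e \<le> central_lift y \<bullet> central_lift z" by (simp add: e_def)
    then have "arccos (central_lift y \<bullet> central_lift z) \<le> arccos e"
      using e abs_inner_central_lift_le[of y z] by (intro arccos_le_arccos) auto
    then show ?thesis using z(1) by simp
  qed
  then have "pi - arccos e \<le> Inf (contact_widths K y)"
    using contact_widths_nonempty[OF K cb c y] by (intro cInf_greatest) auto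
  moreover have "arccos e < arccos 0" using e by (intro arccos_less_arccos) auto
  ultimately show ?thesis by simp
qed

lemma subset_dual_set_if_Inf_contact_widths:
  fixes K :: "'a::euclidean_space set"
  assumes K: "compact K" and cb: "cball 0 c \<subseteq> K" and c: "0 < c"
    and Inf: "\<forall>y\<in>dual_contact K. Inf (contact_widths K y) = pi / 2"
  shows "K \<subseteq> dual_set K"
proof
  fix x assume x: "x \<in> K"
  show "x \<in> dual_set K"
  proof (cases "x = 0")
    case False
    obtain a where a: "0 < a" "x /\<^sub>R a \<in> dual_contact K"
      using scaled_in_dual_contact[OF K cb c False] by metis
    have "a \<le> 1"
    proof (rule ccontr)
      assume "\<not> a \<le> 1"
      then have \<delta>: "0 < 1 - 1 / a" by simp
      have "(1 - 1 / a) - 1 \<le> (x /\<^sub>R a) \<bullet> z" if "z \<in> dual_set K" for z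
        using that x a(1) by (auto simp: dual_set_def inner_commute field_simps)
      then have "pi / 2 < Inf (contact_widths K (x /\<^sub>R a))"
        using Inf_contact_widths_gt_half_pi[OF K cb c a(2) \<delta>] by blast
      then show False using Inf a(2) by simp
    qed
    have "-1 \<le> x \<bullet> x'" if "x' \<in> K" for x'
    proof -
      have "-1 \<le> (x /\<^sub>R a) \<bullet> x'" using a(2) that by (auto simp: dual_contact_def dual_set_def)
      then have "- a \<le> x \<bullet> x'" using a(1) by (simp add: field_simps)
      then show ?thesis using \<open>a \<le> 1\<close> by linarith
    qed
    then show ?thesis by (simp add: dual_set_def)
  qed (simp add: dual_set_def)
qed

lemma self_dual_iff_Inf_contact_widths:
  fixes K :: "'a::euclidean_space set"
  assumes K: "compact K" "convex K" and cb: "cball 0 c \<subseteq> K" and c: "0 < c"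
  shows "K = dual_set K \<longleftrightarrow> (\<forall>y\<in>dual_contact K. Inf (contact_widths K y) = pi / 2)"
proof
  assume "K = dual_set K"
  then show "\<forall>y\<in>dual_contact K. Inf (contact_widths K y) = pi / 2"
    using Inf_contact_widths_if_self_dual by blast
next
  assume Inf: "\<forall>y\<in>dual_contact K. Inf (contact_widths K y) = pi / 2"
  have "0 \<in> K" using cb c by (metis centre_in_cball less_imp_le subsetD)
  then have "dual_set K \<subseteq> K"
    using dual_set_subset_dual_set_dual_set_if_Inf_contact_widths[OF K(1) cb c Inf]
      dual_set_dual_set_subset[OF K(2) compact_imp_closed[OF K(1)]]
    by blast
  moreover have "K \<subseteq> dual_set K"
    using subset_dual_set_if_Inf_contact_widths[OF K(1) cb c Inf] .
  ultimately show "K = dual_set K" by blast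
qed

theorem theorem1:
  fixes \<gamma> :: "'a::euclidean_space \<Rightarrow> real"
  assumes "DIM('a) \<ge> 2"
    and "continuous_on (sphere 0 1) \<gamma>"
    and "\<forall>\<theta>\<in>sphere 0 1. \<gamma> \<theta> > 0"
  shows "self_dual \<gamma> \<longleftrightarrow> constant_width (induced_body (Wulff \<gamma>)) (pi / 2)"
proof -
  obtain c where c: "0 < c" "cball 0 c \<subseteq> Wulff \<gamma>"
    using Wulff_contains_cball assms(2,3) by blast
  have K: "compact (Wulff \<gamma>)" "convex (Wulff \<gamma>)"
    using compact_Wulff[OF assms(2)] convex_Wulff by auto
  have "self_dual \<gamma> \<longleftrightarrow> Wulff \<gamma> = dual_set (Wulff \<gamma>)"
    by (simp add: self_dual_def dual_Wulff_eq_dual_set[OF assms(2,3)])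
  also have "\<dots> \<longleftrightarrow> (\<forall>y\<in>dual_contact (Wulff \<gamma>). Inf (contact_widths (Wulff \<gamma>) y) = pi / 2)"
    using self_dual_iff_Inf_contact_widths[OF K c(2,1)] .
  also have "\<dots> \<longleftrightarrow> constant_width (induced_body (Wulff \<gamma>)) (pi / 2)"
    using constant_width_induced_body_iff[OF K(1) c(2,1)] by simp
  finally show ?thesis .
qed

end
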